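(* If $G$ is a conference graph on $n$ vertices, then $\chi_v(\overline{G})=\chi_v(G)=\sqrt{n}=\chi_{sv}(G)=\chi_{sv}(\overline{G})$.
   Context: A conference graph on $n$ vertices ($n\ge5$) is a strongly regular graph with parameters $(n,\tfrac12(n-1),\tfrac14(n-5),\tfrac14(n-1))$, i.e. a $\tfrac12(n-1)$-regular graph on $n$ vertices in which adjacent vertices have exactly $\tfrac14(n-5)$ and distinct nonadjacent vertices exactly $\tfrac14(n-1)$ common neighbours; $\overline{G}$ is the complement. For a graph on $n$ vertices with at least one edge, a vector $t$-coloring ($t\ge2$) assigns unit vectors $u_i\in\mathbb R^n$ to vertices with $u_i^{\mathrm T}u_j\le-\frac1{t-1}$ for every edge $\{i,j\}$, and a strict vector $t$-coloring requires equality on every edge; $\chi_v$ and $\chi_{sv}$ are the smallest $t\ge2$ admitting a vector, resp. strict vector, $t$-coloring. *)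

theory Defs
  imports "HOL-Analysis.Analysis"
begin

text \<open>Simple graphs on the finite vertex type 'n, given by an adjacency relation E.
  The number of vertices is n = CARD('n); vectors live in real^'n, i.e. R^n.\<close>

definition simple_graph :: "('n::finite \<Rightarrow> 'n \<Rightarrow> bool) \<Rightarrow> bool" where
  "simple_graph E \<longleftrightarrow> (\<forall>v w. E v w \<longrightarrow> E w v) \<and> (\<forall>v. \<not> E v v)"

definition graph_complement :: "('n::finite \<Rightarrow> 'n \<Rightarrow> bool) \<Rightarrow> 'n \<Rightarrow> 'n \<Rightarrow> bool" where
  "graph_complement E v w \<longleftrightarrow> v \<noteq> w \<and> \<not> E v w"

definition strongly_regular ::
  "('n::finite \<Rightarrow> 'n \<Rightarrow> bool) \<Rightarrow> real \<Rightarrow> real \<Rightarrow> real \<Rightarrow> bool" where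
  "strongly_regular E k lam mu \<longleftrightarrow>
     simple_graph E \<and>
     (\<forall>v. real (card {w. E v w}) = k) \<and>
     (\<forall>v w. E v w \<longrightarrow> real (card {x. E v x \<and> E w x}) = lam) \<and>
     (\<forall>v w. v \<noteq> w \<and> \<not> E v w \<longrightarrow> real (card {x. E v x \<and> E w x}) = mu)"

definition conference_graph :: "('n::finite \<Rightarrow> 'n \<Rightarrow> bool) \<Rightarrow> bool" where
  "conference_graph E \<longleftrightarrow>
     CARD('n) \<ge> 5 \<and>
     strongly_regular E ((real CARD('n) - 1) / 2) ((real CARD('n) - 5) / 4) ((real CARD('n) - 1) / 4)"

definition vector_coloring ::
  "('n::finite \<Rightarrow> 'n \<Rightarrow> bool) \<Rightarrow> real \<Rightarrow> ('n \<Rightarrow> real^'n) \<Rightarrow> bool" where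
  "vector_coloring E t u \<longleftrightarrow>
     (\<forall>i. norm (u i) = 1) \<and> (\<forall>i j. E i j \<longrightarrow> u i \<bullet> u j \<le> - 1 / (t - 1))"

definition strict_vector_coloring ::
  "('n::finite \<Rightarrow> 'n \<Rightarrow> bool) \<Rightarrow> real \<Rightarrow> ('n \<Rightarrow> real^'n) \<Rightarrow> bool" where
  "strict_vector_coloring E t u \<longleftrightarrow>
     (\<forall>i. norm (u i) = 1) \<and> (\<forall>i j. E i j \<longrightarrow> u i \<bullet> u j = - 1 / (t - 1))"

definition vector_chromatic :: "('n::finite \<Rightarrow> 'n \<Rightarrow> bool) \<Rightarrow> real" where
  "vector_chromatic E = Inf {t. t \<ge> 2 \<and> (\<exists>u. vector_coloring E t u)}"

definition strict_vector_chromatic :: "('n::finite \<Rightarrow> 'n \<Rightarrow> bool) \<Rightarrow> real" where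
  "strict_vector_chromatic E = Inf {t. t \<ge> 2 \<and> (\<exists>u. strict_vector_coloring E t u)}"

end

(*
  Let A be the adjacency matrix of a strongly regular graph with degree k and restricted
  eigenvalues theta > tau, i.e. A^2 = (k - mu) I + (lam - mu) A + mu J with theta + tau = lam - mu
  and theta tau = mu - k.  Then A - tau I is positive semidefinite, so for any vector t-colouring
  the edge inner products, each at most -1/(t - 1), sum to at least tau n; this Hoffman-type
  argument gives t >= 1 - k/tau.  Conversely, the Gram vectors of the projection onto the
  tau-eigenspace are unit vectors whose inner product on every edge is exactly tau/k, a strict
  vector colouring attaining the bound.  For a conference graph theta, tau = (-1 +- sqrt n)/2 and
  1 - k/tau = sqrt n; the complement of a conference graph is again a conference graph.
*)

theory Submission
  imports Defs
begin

lemma norm_sum_squared_le: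
  fixes z :: "'a \<Rightarrow> 'v::real_normed_vector"
  shows "(norm (\<Sum>i\<in>I. z i))\<^sup>2 \<le> real (card I) * (\<Sum>i\<in>I. (norm (z i))\<^sup>2)"
proof -
  have "(norm (\<Sum>i\<in>I. z i))\<^sup>2 \<le> (\<Sum>i\<in>I. norm (z i))\<^sup>2"
    by (intro power_mono norm_sum norm_ge_zero)
  also have "\<dots> \<le> real (card I) * (\<Sum>i\<in>I. (norm (z i))\<^sup>2)"
    using sum_squared_le_sum_of_squares[of "\<lambda>i. norm (z i)" I] by (simp add: mult.commute)
  finally show ?thesis .
qed

lemma quadratic_form_nonneg_of_square:
  fixes B :: "'n::finite \<Rightarrow> 'n \<Rightarrow> real" and u :: "'n \<Rightarrow> 'v::real_inner"
  assumes sym: "\<And>i j. B i j = B j i"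
    and square: "\<And>i j. (\<Sum>l\<in>UNIV. B i l * B l j) = s * B i j + m"
    and cols: "\<And>j. (\<Sum>i\<in>UNIV. B i j) = c"
    and "0 < s" and "m * real CARD('n) \<le> c\<^sup>2"
  shows "0 \<le> (\<Sum>i\<in>UNIV. \<Sum>j\<in>UNIV. B i j * (u i \<bullet> u j))" (is "0 \<le> ?Q")
proof -
  \<comment> \<open>With z i = (SUM j. B i j u j): the sum of the squared norms of the z i is s Q + m |U|^2,
    while the z i sum to c U, so by Cauchy-Schwarz n (s Q + m |U|^2) >= c^2 |U|^2.\<close>
  define U where "U = (\<Sum>i\<in>UNIV. u i)"
  define z where "z i = (\<Sum>j\<in>UNIV. B i j *\<^sub>R u j)" for i
  have U_square: "U \<bullet> U = (\<Sum>j\<in>UNIV. \<Sum>l\<in>UNIV. u j \<bullet> u l)"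
    unfolding U_def inner_sum_left inner_sum_right by (rule sum.swap)
  have "(\<Sum>i\<in>UNIV. z i \<bullet> z i) = (\<Sum>i\<in>UNIV. \<Sum>j\<in>UNIV. \<Sum>l\<in>UNIV. B i j * B i l * (u j \<bullet> u l))"
    by (simp add: z_def inner_sum_left inner_sum_right sum_distrib_left algebra_simps inner_commute)
  also have "\<dots> = (\<Sum>j\<in>UNIV. \<Sum>l\<in>UNIV. \<Sum>i\<in>UNIV. B j i * B i l * (u j \<bullet> u l))"
    by (subst sum.swap, rule sum.cong[OF refl], subst sum.swap) (simp add: sym)
  also have "\<dots> = (\<Sum>j\<in>UNIV. \<Sum>l\<in>UNIV. (s * B j l + m) * (u j \<bullet> u l))"
    by (simp add: square flip: sum_distrib_right)
  also have "\<dots> = s * ?Q + m * (U \<bullet> U)"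
    by (simp add: U_square distrib_right sum.distrib sum_distrib_left mult.assoc)
  finally have z_square: "(\<Sum>i\<in>UNIV. z i \<bullet> z i) = s * ?Q + m * (U \<bullet> U)" .
  have "(\<Sum>i\<in>UNIV. z i) = (\<Sum>j\<in>UNIV. \<Sum>i\<in>UNIV. B i j *\<^sub>R u j)"
    unfolding z_def by (rule sum.swap)
  also have "\<dots> = c *\<^sub>R U"
    by (simp add: cols U_def scaleR_sum_right flip: scaleR_sum_left)
  finally have "c\<^sup>2 * (U \<bullet> U) \<le> real CARD('n) * (s * ?Q + m * (U \<bullet> U))"
    using norm_sum_squared_le[of z UNIV] by (simp add: z_square power2_norm_eq_inner power_mult_distrib)
  moreover have "m * real CARD('n) * (U \<bullet> U) \<le> c\<^sup>2 * (U \<bullet> U)"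
    using assms by (simp add: mult_right_mono)
  ultimately have "0 \<le> real CARD('n) * (s * ?Q)"
    by (simp add: algebra_simps)
  then show ?thesis
    using \<open>0 < s\<close> by (simp add: zero_le_mult_iff)
qed

lemma gram_vectors_exist:
  fixes M :: "'n::finite \<Rightarrow> 'n \<Rightarrow> real"
  assumes sym: "\<And>i j. M i j = M j i"
    and square: "\<And>i j. (\<Sum>l\<in>UNIV. M i l * M l j) = s * M i j" and "0 < s"
  shows "\<exists>v :: 'n \<Rightarrow> real^'n. \<forall>i j. v i \<bullet> v j = M i j"
proof
  define v :: "'n \<Rightarrow> real^'n" where "v i = (\<chi> l. M l i / sqrt s)" for i
  have "v i \<bullet> v j = (\<Sum>l\<in>UNIV. M i l * M l j) / s" for i j
    using \<open>0 < s\<close> by (simp add: v_def inner_vec_def sum_divide_distrib sym[of _ i] power2_eq_square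
        flip: real_sqrt_mult)
  then show "\<forall>i j. v i \<bullet> v j = M i j"
    using \<open>0 < s\<close> by (simp add: square)
qed

definition adjacency :: "('n::finite \<Rightarrow> 'n \<Rightarrow> bool) \<Rightarrow> 'n \<Rightarrow> 'n \<Rightarrow> real" where
  "adjacency E i j = of_bool (E i j)"

lemma sum_adjacency:
  "(\<Sum>l\<in>UNIV. adjacency E i l) = real (card {l. E i l})"
  by (simp add: adjacency_def)

lemma adjacency_sym:
  assumes "simple_graph E"
  shows "adjacency E i j = adjacency E j i"
  using assms by (auto simp: adjacency_def simple_graph_def)

lemma sum_adjacency_mult_adjacency:
  assumes "simple_graph E"
  shows "(\<Sum>l\<in>UNIV. adjacency E i l * adjacency E l j) = real (card {l. E i l \<and> E j l})"
proof -
  have "adjacency E l j = adjacency E j l" for l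
    using assms by (auto simp: adjacency_def simple_graph_def)
  then show ?thesis
    by (simp add: adjacency_def flip: of_bool_conj)
qed

lemma adjacency_graph_complement:
  assumes "simple_graph E"
  shows "adjacency (graph_complement E) i j = 1 - of_bool (i = j) - adjacency E i j"
  using assms by (auto simp: adjacency_def graph_complement_def simple_graph_def)

lemma vector_coloring_hoffman_bound:
  fixes F :: "'n::finite \<Rightarrow> 'n \<Rightarrow> bool"
  assumes coloring: "vector_coloring F t u" and "1 < t" "\<tau> < 0"
    and rows: "\<And>i. (\<Sum>j\<in>UNIV. adjacency F i j) = k"
    and psd: "0 \<le> (\<Sum>i\<in>UNIV. \<Sum>j\<in>UNIV. (adjacency F i j - \<tau> * of_bool (i = j)) * (u i \<bullet> u j))"
  shows "1 - k / \<tau> \<le> t"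
proof -
  define N where "N = real CARD('n)"
  have unit: "u i \<bullet> u i = 1" for i
    using coloring by (simp add: vector_coloring_def norm_eq_1)
  have "adjacency F i j * (u i \<bullet> u j) \<le> adjacency F i j * (- 1 / (t - 1))" for i j
    using coloring by (simp add: vector_coloring_def adjacency_def)
  then have "(\<Sum>i\<in>UNIV. \<Sum>j\<in>UNIV. adjacency F i j * (u i \<bullet> u j))
      \<le> (\<Sum>i\<in>UNIV. \<Sum>j\<in>UNIV. adjacency F i j * (- 1 / (t - 1)))"
    by (intro sum_mono)
  also have "\<dots> = N * k * (- 1 / (t - 1))"
    unfolding sum_distrib_right[symmetric] rows by (simp add: N_def)
  finally have edges: "(\<Sum>i\<in>UNIV. \<Sum>j\<in>UNIV. adjacency F i j * (u i \<bullet> u j)) \<le> N * k * (- 1 / (t - 1))" .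
  have diagonal: "(\<Sum>i\<in>UNIV. \<Sum>j\<in>UNIV. of_bool (i = j) * (u i \<bullet> u j)) = N"
    by (simp add: unit N_def)
  have "0 \<le> N * (k * (- 1 / (t - 1)) - \<tau>)"
    using psd edges diagonal
    by (simp add: left_diff_distrib sum_subtractf mult.assoc algebra_simps flip: sum_distrib_left)
  then have "k / (t - 1) \<le> - \<tau>"
    by (simp add: N_def zero_le_mult_iff)
  then have "k \<le> - \<tau> * (t - 1)"
    using \<open>1 < t\<close> by (simp add: divide_le_eq)
  then have "k / (- \<tau>) \<le> t - 1"
    using \<open>\<tau> < 0\<close> by (subst pos_divide_le_eq) (simp_all add: algebra_simps)
  then show ?thesis
    by simp
qed

lemma strongly_regular_iff_adjacency:
  "strongly_regular E k lam mu \<longleftrightarrow> simple_graph E \<and> (\<forall>i. (\<Sum>l\<in>UNIV. adjacency E i l) = k) \<and>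
     (\<forall>i j. (\<Sum>l\<in>UNIV. adjacency E i l * adjacency E l j)
              = (k - mu) * of_bool (i = j) + (lam - mu) * adjacency E i j + mu)"
  (is "_ \<longleftrightarrow> _ \<and> _ \<and> ?square")
proof (cases "simple_graph E")
  case True
  then have irrefl: "\<not> E i i" for i by (simp add: simple_graph_def)
  have "?square \<longleftrightarrow> (\<forall>i. real (card {l. E i l}) = k) \<and>
      (\<forall>i j. E i j \<longrightarrow> real (card {l. E i l \<and> E j l}) = lam) \<and>
      (\<forall>i j. i \<noteq> j \<and> \<not> E i j \<longrightarrow> real (card {l. E i l \<and> E j l}) = mu)"
    unfolding sum_adjacency_mult_adjacency[OF True]
    by (auto simp: adjacency_def irrefl) (metis irrefl)
  then show ?thesis
    using True by (auto simp: strongly_regular_def sum_adjacency)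
qed (simp add: strongly_regular_def)

text \<open>The span of I, A and J is closed under multiplication (the Bose-Mesner algebra of the
  graph); this is its multiplication table.\<close>

lemma strongly_regular_adjacency_product:
  fixes E :: "'n::finite \<Rightarrow> 'n \<Rightarrow> bool"
  assumes "strongly_regular E k lam mu"
  defines "A \<equiv> adjacency E"
  shows "(\<Sum>l\<in>UNIV. (p * of_bool (i = l) + q * A i l + c) * (p' * of_bool (l = j) + q' * A l j + c'))
    = (p * p' + q * q' * (k - mu)) * of_bool (i = j) + (p * q' + q * p' + q * q' * (lam - mu)) * A i j
      + (p * c' + c * p' + q * q' * mu + (q * c' + c * q') * k + c * c' * real CARD('n))"
proof -
  from assms have simple: "simple_graph E" and rows: "\<And>i. (\<Sum>l\<in>UNIV. A i l) = k"
    and square: "\<And>i j. (\<Sum>l\<in>UNIV. A i l * A l j) = (k - mu) * of_bool (i = j) + (lam - mu) * A i j + mu"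
    by (simp_all add: strongly_regular_iff_adjacency)
  have cols: "(\<Sum>l\<in>UNIV. A l j) = k"
    using rows[of j] adjacency_sym[OF simple] by (simp add: A_def)
  define g where "g l = p' * of_bool (l = j) + q' * A l j + c'" for l
  have "(\<Sum>l\<in>UNIV. (p * of_bool (i = l) + q * A i l + c) * g l)
      = p * g i + q * (\<Sum>l\<in>UNIV. A i l * g l) + c * (\<Sum>l\<in>UNIV. g l)"
    by (simp add: algebra_simps sum.distrib flip: sum_distrib_left)
  also have "(\<Sum>l\<in>UNIV. A i l * g l) = p' * A i j + q' * (\<Sum>l\<in>UNIV. A i l * A l j) + c' * k"
    using rows by (simp add: g_def algebra_simps sum.distrib flip: sum_distrib_left)
  also have "(\<Sum>l\<in>UNIV. g l) = p' + q' * k + c' * real CARD('n)"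
    by (simp add: g_def sum.distrib flip: sum_distrib_left cols)
  finally show ?thesis
    unfolding g_def square by (simp add: algebra_simps)
qed

lemma strongly_regular_parameters:
  fixes E :: "'n::finite \<Rightarrow> 'n \<Rightarrow> bool"
  assumes "strongly_regular E k lam mu"
  shows "k * (k - lam - 1) = mu * (real CARD('n) - k - 1)"
proof -
  define A where "A = adjacency E"
  from assms have rows: "\<And>i. (\<Sum>l\<in>UNIV. A i l) = k"
    and square: "\<And>i j. (\<Sum>l\<in>UNIV. A i l * A l j) = (k - mu) * of_bool (i = j) + (lam - mu) * A i j + mu"
    by (simp_all add: strongly_regular_iff_adjacency A_def)
  fix i :: 'n
  have "k * k = (\<Sum>l\<in>UNIV. A i l * (\<Sum>j\<in>UNIV. A l j))"
    by (simp add: rows flip: sum_distrib_right)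
  also have "\<dots> = (\<Sum>j\<in>UNIV. \<Sum>l\<in>UNIV. A i l * A l j)"
    unfolding sum_distrib_left by (rule sum.swap)
  also have "\<dots> = k - mu + (lam - mu) * k + mu * real CARD('n)"
    by (simp add: square sum.distrib rows flip: sum_distrib_left)
  finally show ?thesis
    by (simp add: algebra_simps)
qed

lemma strongly_regular_complement:
  fixes E :: "'n::finite \<Rightarrow> 'n \<Rightarrow> bool"
  assumes "strongly_regular E k lam mu"
  defines "N \<equiv> real CARD('n)"
  shows "strongly_regular (graph_complement E) (N - k - 1) (N - 2 * k + mu - 2) (N - 2 * k + lam)"
proof -
  have simple: "simple_graph E" and rows: "\<And>i. (\<Sum>l\<in>UNIV. adjacency E i l) = k"
    using assms by (simp_all add: strongly_regular_iff_adjacency)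
  have "simple_graph (graph_complement E)"
    using simple by (auto simp: simple_graph_def graph_complement_def)
  moreover have "(\<Sum>l\<in>UNIV. adjacency (graph_complement E) i l) = N - k - 1" for i
    using rows[of i] by (simp add: adjacency_graph_complement[OF simple] sum_subtractf N_def)
  moreover have "(\<Sum>l\<in>UNIV. adjacency (graph_complement E) i l * adjacency (graph_complement E) l j)
      = (N - k - 1 - (N - 2 * k + lam)) * of_bool (i = j)
        + (N - 2 * k + mu - 2 - (N - 2 * k + lam)) * adjacency (graph_complement E) i j + (N - 2 * k + lam)" for i j
    using strongly_regular_adjacency_product[OF assms(1), of "-1" i "-1" 1 "-1" j "-1" 1]
    by (simp add: adjacency_graph_complement[OF simple] N_def algebra_simps)
  ultimately show ?thesis
    by (simp add: strongly_regular_iff_adjacency)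
qed

lemma strongly_regular_eigenvalue_product:
  fixes E :: "'n::finite \<Rightarrow> 'n \<Rightarrow> bool"
  assumes srg: "strongly_regular E k lam mu"
    and eig: "\<theta> + \<tau> = lam - mu" "\<theta> * \<tau> = mu - k"
  shows "mu * real CARD('n) = (k - \<theta>) * (k - \<tau>)"
proof -
  have "(k - \<theta>) * (k - \<tau>) = k * k - k * (lam - mu) + (mu - k)"
    unfolding eig[symmetric] by (simp add: algebra_simps)
  then show ?thesis
    using strongly_regular_parameters[OF srg] by (simp add: algebra_simps)
qed

lemma strongly_regular_shifted_square:
  fixes E :: "'n::finite \<Rightarrow> 'n \<Rightarrow> bool"
  assumes srg: "strongly_regular E k lam mu"
    and eig: "\<theta> + \<tau> = lam - mu" "\<theta> * \<tau> = mu - k"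
  defines "B \<equiv> \<lambda>i j. adjacency E i j - \<tau> * of_bool (i = j)"
  shows "(\<Sum>l\<in>UNIV. B i l * B l j) = (\<theta> - \<tau>) * B i j + mu"
proof -
  have "(\<Sum>l\<in>UNIV. B i l * B l j) = (\<Sum>l\<in>UNIV. (- \<tau> * of_bool (i = l) + 1 * adjacency E i l + 0)
      * (- \<tau> * of_bool (l = j) + 1 * adjacency E l j + 0))"
    by (simp add: B_def algebra_simps)
  also have "\<dots> = (\<tau> * \<tau> + (k - mu)) * of_bool (i = j) + (lam - mu - 2 * \<tau>) * adjacency E i j + mu"
    using strongly_regular_adjacency_product[OF srg, of "- \<tau>" i 1 0 "- \<tau>" j 1 0]
    by (simp add: algebra_simps)
  also have "\<dots> = (\<theta> - \<tau>) * B i j + mu"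
  proof -
    have "lam = \<theta> + \<tau> + mu" "k = mu - \<theta> * \<tau>"
      using eig by linarith+
    then show ?thesis
      by (simp add: B_def algebra_simps)
  qed
  finally show ?thesis .
qed

lemma strongly_regular_least_eigenvalue:
  fixes E :: "'n::finite \<Rightarrow> 'n \<Rightarrow> bool" and u :: "'n \<Rightarrow> 'v::real_inner"
  assumes srg: "strongly_regular E k lam mu"
    and eig: "\<theta> + \<tau> = lam - mu" "\<theta> * \<tau> = mu - k" and "\<tau> < \<theta>" "\<tau> \<le> k"
  shows "0 \<le> (\<Sum>i\<in>UNIV. \<Sum>j\<in>UNIV. (adjacency E i j - \<tau> * of_bool (i = j)) * (u i \<bullet> u j))"
proof (rule quadratic_form_nonneg_of_square)
  have simple: "simple_graph E" and rows: "\<And>i. (\<Sum>l\<in>UNIV. adjacency E i l) = k"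
    using srg by (simp_all add: strongly_regular_iff_adjacency)
  show "adjacency E i j - \<tau> * of_bool (i = j) = adjacency E j i - \<tau> * of_bool (j = i)" for i j
    using adjacency_sym[OF simple] by auto
  show "(\<Sum>i\<in>UNIV. adjacency E i j - \<tau> * of_bool (i = j)) = k - \<tau>" for j
    using rows[of j] by (simp add: sum_subtractf adjacency_sym[OF simple, of _ j])
  show "mu * real CARD('n) \<le> (k - \<tau>)\<^sup>2"
    using assms by (simp add: strongly_regular_eigenvalue_product[OF srg eig] power2_eq_square mult_right_mono)
qed (use assms strongly_regular_shifted_square[OF srg eig] in auto)

text \<open>Up to the factor theta - tau, this is the orthogonal projection onto the tau-eigenspace.\<close>

lemma strongly_regular_eigenprojection_square:
  fixes E :: "'n::finite \<Rightarrow> 'n \<Rightarrow> bool"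
  assumes srg: "strongly_regular E k lam mu"
    and eig: "\<theta> + \<tau> = lam - mu" "\<theta> * \<tau> = mu - k"
  defines "M \<equiv> \<lambda>i j. \<theta> * of_bool (i = j) - adjacency E i j + (k - \<theta>) / real CARD('n)"
  shows "(\<Sum>l\<in>UNIV. M i l * M l j) = (\<theta> - \<tau>) * M i j"
proof -
  define N where "N = real CARD('n)"
  define c where "c = (k - \<theta>) / N"
  have "N > 0"
    by (simp add: N_def)
  have mu: "mu = c * (k - \<tau>)"
    using strongly_regular_eigenvalue_product[OF srg eig] \<open>N > 0\<close> by (simp add: c_def N_def field_simps)
  have M_c: "M = (\<lambda>i j. \<theta> * of_bool (i = j) - adjacency E i j + c)"
    by (simp add: M_def c_def N_def)
  have "(\<Sum>l\<in>UNIV. M i l * M l j) = (\<theta> * \<theta> + (k - mu)) * of_bool (i = j)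
      + (lam - mu - 2 * \<theta>) * adjacency E i j + (2 * \<theta> * c + mu - 2 * c * k + c * c * N)"
    using strongly_regular_adjacency_product[OF srg, of \<theta> i "-1" c \<theta> j "-1" c]
    by (simp add: M_c N_def algebra_simps)
  also have "\<dots> = (\<theta> - \<tau>) * M i j"
  proof -
    have "\<theta> * \<theta> + (k - mu) = (\<theta> - \<tau>) * \<theta>" "lam - mu - 2 * \<theta> = - (\<theta> - \<tau>)"
      using eig by (simp_all add: algebra_simps)
    moreover have "c * c * N = c * (k - \<theta>)"
      using \<open>N > 0\<close> by (simp add: c_def)
    then have "2 * \<theta> * c + mu - 2 * c * k + c * c * N = (\<theta> - \<tau>) * c"
      unfolding mu by (simp add: algebra_simps)
    ultimately show ?thesis
      by (simp add: M_c algebra_simps)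
  qed
  finally show ?thesis .
qed

lemma strongly_regular_strict_vector_coloring:
  fixes E :: "'n::finite \<Rightarrow> 'n \<Rightarrow> bool"
  assumes srg: "strongly_regular E k lam mu"
    and eig: "\<theta> + \<tau> = lam - mu" "\<theta> * \<tau> = mu - k"
    and "\<tau> < \<theta>" "\<tau> < 0" "0 \<le> \<theta>" "0 < k"
  shows "\<exists>u. strict_vector_coloring E (1 - k / \<tau>) u"
proof -
  define N where "N = real CARD('n)"
  define c where "c = (k - \<theta>) / N"
  define M where "M i j = \<theta> * of_bool (i = j) - adjacency E i j + c" for i j
  have "N \<ge> 1"
    by (simp add: N_def)
  have simple: "simple_graph E"
    using srg by (simp add: strongly_regular_iff_adjacency)
  have M_sym: "M i j = M j i" for i j
    using adjacency_sym[OF simple] by (auto simp: M_def)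
  obtain v :: "'n \<Rightarrow> real^'n" where v: "\<And>i j. v i \<bullet> v j = M i j"
    using gram_vectors_exist[of M "\<theta> - \<tau>", OF M_sym] \<open>\<tau> < \<theta>\<close>
      strongly_regular_eigenprojection_square[OF srg eig]
    by (auto simp: M_def c_def N_def)
  define d where "d = \<theta> + c"
  have "d * N = \<theta> * (N - 1) + k"
    using \<open>N \<ge> 1\<close> by (simp add: d_def c_def field_simps)
  moreover have "0 < \<theta> * (N - 1) + k"
    using assms \<open>N \<ge> 1\<close> by (simp add: add_nonneg_pos)
  ultimately have "d > 0"
    using zero_less_mult_pos2[of d N] \<open>N \<ge> 1\<close> by simp
  define u where "u i = (1 / sqrt d) *\<^sub>R v i" for i
  have u: "u i \<bullet> u j = M i j / d" for i j
    using \<open>d > 0\<close> by (simp add: u_def v power2_eq_square flip: real_sqrt_mult)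
  have "c * (k - \<tau>) = k + \<theta> * \<tau>"
    using strongly_regular_eigenvalue_product[OF srg eig] eig(2) \<open>N \<ge> 1\<close>
    by (simp add: c_def N_def field_simps)
  then have "(c - 1) * k = \<tau> * d"
    by (simp add: d_def algebra_simps)
  then have edge: "(c - 1) / d = - 1 / (1 - k / \<tau> - 1)"
    using \<open>d > 0\<close> assms by (simp add: field_simps)
  have "strict_vector_coloring E (1 - k / \<tau>) u"
    unfolding strict_vector_coloring_def
  proof (intro conjI allI impI)
    show "norm (u i) = 1" for i
      using simple \<open>d > 0\<close> by (simp add: norm_eq_1 u M_def d_def adjacency_def simple_graph_def)
    show "u i \<bullet> u j = - 1 / (1 - k / \<tau> - 1)" if "E i j" for i j
      using that simple edge by (auto simp: u M_def adjacency_def simple_graph_def)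
  qed
  then show ?thesis
    by blast
qed

lemma strongly_regular_vector_chromatic:
  fixes E :: "'n::finite \<Rightarrow> 'n \<Rightarrow> bool"
  assumes srg: "strongly_regular E k lam mu"
    and eig: "\<theta> + \<tau> = lam - mu" "\<theta> * \<tau> = mu - k"
    and "\<tau> < \<theta>" "\<tau> < 0" "0 \<le> \<theta>" and two: "2 \<le> 1 - k / \<tau>"
  shows "vector_chromatic E = 1 - k / \<tau> \<and> strict_vector_chromatic E = 1 - k / \<tau>"
proof -
  have "- \<tau> \<le> k"
    using two \<open>\<tau> < 0\<close> by (simp add: divide_le_eq)
  obtain u where strict: "strict_vector_coloring E (1 - k / \<tau>) u"
    using strongly_regular_strict_vector_coloring[OF srg eig] assms \<open>- \<tau> \<le> k\<close> by force
  have strict_imp: "strict_vector_coloring E t v \<Longrightarrow> vector_coloring E t v" for t v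
    by (simp add: strict_vector_coloring_def vector_coloring_def)
  have lower: "1 - k / \<tau> \<le> t" if "2 \<le> t" "vector_coloring E t v" for t v
  proof (rule vector_coloring_hoffman_bound[OF that(2)])
    show "(\<Sum>j\<in>UNIV. adjacency E i j) = k" for i
      using srg by (simp add: strongly_regular_iff_adjacency)
    show "0 \<le> (\<Sum>i\<in>UNIV. \<Sum>j\<in>UNIV. (adjacency E i j - \<tau> * of_bool (i = j)) * (v i \<bullet> v j))"
      using strongly_regular_least_eigenvalue[OF srg eig] assms \<open>- \<tau> \<le> k\<close> by simp
  qed (use that assms in auto)
  have "vector_chromatic E = 1 - k / \<tau>"
    unfolding vector_chromatic_def
    by (rule cInf_eq_minimum) (use two strict strict_imp lower in auto)
  moreover have "strict_vector_chromatic E = 1 - k / \<tau>"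
    unfolding strict_vector_chromatic_def
    by (rule cInf_eq_minimum) (use two strict strict_imp lower in auto)
  ultimately show ?thesis ..
qed

lemma conference_graph_complement:
  fixes E :: "'n::finite \<Rightarrow> 'n \<Rightarrow> bool"
  assumes "conference_graph E"
  shows "conference_graph (graph_complement E)"
proof -
  define N where "N = real CARD('n)"
  have srg: "strongly_regular E ((N - 1) / 2) ((N - 5) / 4) ((N - 1) / 4)"
    using assms by (simp add: conference_graph_def N_def)
  have eqs: "N - (N - 1) / 2 - 1 = (N - 1) / 2" "N - 2 * ((N - 1) / 2) + (N - 1) / 4 - 2 = (N - 5) / 4"
    "N - 2 * ((N - 1) / 2) + (N - 5) / 4 = (N - 1) / 4"
    by (simp_all add: field_simps)
  show ?thesis
    using strongly_regular_complement[OF srg, folded N_def, unfolded eqs] assms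
    by (simp add: conference_graph_def N_def)
qed

lemma conference_graph_vector_chromatic:
  fixes E :: "'n::finite \<Rightarrow> 'n \<Rightarrow> bool"
  assumes "conference_graph E"
  shows "vector_chromatic E = sqrt (real CARD('n)) \<and> strict_vector_chromatic E = sqrt (real CARD('n))"
proof -
  define N where "N = real CARD('n)"
  define r where "r = sqrt N"
  have srg: "strongly_regular E ((N - 1) / 2) ((N - 5) / 4) ((N - 1) / 4)" and "N \<ge> 5"
    using assms by (simp_all add: conference_graph_def N_def)
  then have "r * r = N" "r \<ge> 2"
    using real_sqrt_le_mono[of 4 N] by (simp_all add: r_def)
  then have "(r - 1) / 2 + - (r + 1) / 2 = (N - 5) / 4 - (N - 1) / 4"
    "(r - 1) / 2 * (- (r + 1) / 2) = (N - 1) / 4 - (N - 1) / 2"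
    "1 - (N - 1) / 2 / (- (r + 1) / 2) = r"
    by (auto simp: field_simps)
  with strongly_regular_vector_chromatic[OF srg, of "(r - 1) / 2" "- (r + 1) / 2"] \<open>r \<ge> 2\<close>
  show ?thesis
    by (simp add: r_def N_def)
qed

theorem mainTheorem11:
  fixes E :: "'n::finite \<Rightarrow> 'n \<Rightarrow> bool"
  assumes "conference_graph E"
  shows "vector_chromatic (graph_complement E) = vector_chromatic E
       \<and> vector_chromatic E = sqrt (real CARD('n))
       \<and> sqrt (real CARD('n)) = strict_vector_chromatic E
       \<and> strict_vector_chromatic E = strict_vector_chromatic (graph_complement E)"
  using conference_graph_vector_chromatic[OF assms]
    conference_graph_vector_chromatic[OF conference_graph_complement[OF assms]]
  by simp

end
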